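(* In the bilocality scenario, let the two sources each prepare the singlet, $\rho=|\Psi^-_{AB_1}\rangle\langle\Psi^-_{AB_1}|\otimes|\Psi^-_{B_2C}\rangle\langle\Psi^-_{B_2C}|$, let $A$ and $C$ measure $A_0=C_0=(\sigma_z+\sigma_x)/\sqrt2$, $A_1=C_1=(\sigma_z-\sigma_x)/\sqrt2$, and let $B$ either (case 14) perform the complete Bell-state measurement on $B_1B_2$, or (case 22) choose $y\in\{0,1\}$ and measure the two-outcome observable $\mathcal B_y=(1-y)\,\sigma_z\otimes\sigma_z+y\,\sigma_x\otimes\sigma_x$. In the strong-eavesdropper scenario (a single eavesdropper who may act jointly on both sources), there is an eavesdropping strategy reproducing exactly the observed distribution $p(abc\mid xyz)$ for all settings, namely preparing $$\tilde\rho=\tfrac14\sum_{\psi\in\{\Phi^+,\Phi^-,\Psi^+,\Psi^-\}}|\psi_{AC}\rangle\langle\psi_{AC}|\otimes|\psi_{B_1B_2}\rangle\langle\psi_{B_1B_2}|$$ with the eavesdropper knowing $\psi$, which achieves guessing probability $3/8$ both for the outcomes $(a,b,c)$ at $x=z=0$ (and $y=0$ in case 22) and for $(a,c)$ at $x=z=0$. Consequently $H_{\min}(ABC\mid E)\le\log_2(8/3)\approx1.41$ and $H_{\min}(AC\mid E)\le\log_2(8/3)\approx1.41$ in both cases.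
   Context: Bell states: $|\Phi^\pm\rangle=(|00\rangle\pm|11\rangle)/\sqrt2$, $|\Psi^\pm\rangle=(|01\rangle\pm|10\rangle)/\sqrt2$; $\sigma_x,\sigma_z$ are Pauli matrices. The min-entropy is $H_{\min}=-\log_2P_{\mathrm{guess}}$, where $P_{\mathrm{guess}}$ is the maximal probability, over eavesdropper strategies allowed by the scenario that reproduce the observed statistics of $A,B,C$, that the eavesdropper's output equals the targeted outcomes; any particular such strategy lower-bounds $P_{\mathrm{guess}}$ and hence upper-bounds $H_{\min}$. *)

theory Defs
  imports Complex_Main
begin

text \<open>Computational basis of a qubit: False = |0>, True = |1>.
  All states and observables in this statement have real entries, so real matrices
  are used throughout.\<close>

type_synonym qop = "bool \<Rightarrow> bool \<Rightarrow> real"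
type_synonym qop2 = "bool \<times> bool \<Rightarrow> bool \<times> bool \<Rightarrow> real"

text \<open>Four-qubit register ordered as (A, B1, B2, C).\<close>
type_synonym idx4 = "bool \<times> bool \<times> bool \<times> bool"
type_synonym op4 = "idx4 \<Rightarrow> idx4 \<Rightarrow> real"

definition sgn_bit :: "bool \<Rightarrow> real" where
  "sgn_bit a = (if a then -1 else 1)"

definition id1 :: qop where "id1 i j = (if i = j then 1 else 0)"
definition sigma_z :: qop where "sigma_z i j = (if i = j then sgn_bit i else 0)"
definition sigma_x :: qop where "sigma_x i j = (if i \<noteq> j then 1 else 0)"

text \<open>A_0 = C_0 = (sigma_z + sigma_x)/sqrt 2, A_1 = C_1 = (sigma_z - sigma_x)/sqrt 2;
  setting False = 0, True = 1.\<close>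
definition obsAC :: "bool \<Rightarrow> qop" where
  "obsAC x i j = (sigma_z i j + sgn_bit x * sigma_x i j) / sqrt 2"

text \<open>Projector onto outcome a (False = outcome +1, True = outcome -1) of a +-1 observable.\<close>
definition projAC :: "bool \<Rightarrow> bool \<Rightarrow> qop" where
  "projAC x a i j = (id1 i j + sgn_bit a * obsAC x i j) / 2"

text \<open>Bell vectors as two-qubit amplitude functions:
  0 = Phi+, 1 = Phi-, 2 = Psi+, 3 = Psi-.\<close>
definition bellv :: "nat \<Rightarrow> bool \<Rightarrow> bool \<Rightarrow> real" where
  "bellv k u v =
     (if k = 0 then (if u = v then 1 / sqrt 2 else 0)
      else if k = 1 then (if u = v then sgn_bit u / sqrt 2 else 0)
      else if k = 2 then (if u \<noteq> v then 1 / sqrt 2 else 0)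
      else (if u \<noteq> v then sgn_bit u / sqrt 2 else 0))"

datatype bcase = Case14 | Case22

definition Ysets :: "bcase \<Rightarrow> nat set" where
  "Ysets cs = (case cs of Case14 \<Rightarrow> {0} | Case22 \<Rightarrow> {0, 1})"

definition Bouts :: "bcase \<Rightarrow> nat set" where
  "Bouts cs = (case cs of Case14 \<Rightarrow> {0..<4} | Case22 \<Rightarrow> {0, 1})"

definition Bobs :: "nat \<Rightarrow> qop2" where
  "Bobs y = (\<lambda>(u1, u2) (v1, v2).
     (1 - real y) * sigma_z u1 v1 * sigma_z u2 v2 + real y * sigma_x u1 v1 * sigma_x u2 v2)"

text \<open>POVM element of B for setting y and outcome b. Case 14: complete Bell-state
  measurement (outcome b = projection on Bell state b). Case 22: outcome 0 = +1,
  outcome 1 = -1 of B_y.\<close>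
definition projB :: "bcase \<Rightarrow> nat \<Rightarrow> nat \<Rightarrow> qop2" where
  "projB cs y b = (\<lambda>(u1, u2) (v1, v2).
     (case cs of
        Case14 \<Rightarrow> bellv b u1 u2 * bellv b v1 v2
      | Case22 \<Rightarrow> ((if (u1, u2) = (v1, v2) then 1 else 0)
                   + (if b = 0 then 1 else -1) * Bobs y (u1, u2) (v1, v2)) / 2))"

text \<open>p(abc|xyz) = Tr[sigma (A^a_x (x) B^b_y (x) C^c_z)].\<close>
definition prob :: "bcase \<Rightarrow> op4 \<Rightarrow> bool \<Rightarrow> nat \<Rightarrow> bool \<Rightarrow> bool \<Rightarrow> nat \<Rightarrow> bool \<Rightarrow> real" where
  "prob cs \<sigma> x y z a b c =
     (\<Sum>i\<in>UNIV. \<Sum>j\<in>UNIV.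
        \<sigma> i j * (case (j, i) of ((a1, b1, b2, c1), (a2, b1', b2', c2)) \<Rightarrow>
          projAC x a a1 a2 * projB cs y b (b1, b2) (b1', b2') * projAC z c c1 c2))"

definition singlet :: "bool \<Rightarrow> bool \<Rightarrow> real" where
  "singlet = bellv 3"

definition rho :: op4 where
  "rho = (\<lambda>(a, b1, b2, c) (a', b1', b2', c').
     singlet a b1 * singlet a' b1' * singlet b2 c * singlet b2' c')"

definition rho_tilde_comp :: "nat \<Rightarrow> op4" where
  "rho_tilde_comp k = (\<lambda>(a, b1, b2, c) (a', b1', b2', c').
     bellv k a c * bellv k a' c' * bellv k b1 b2 * bellv k b1' b2')"

definition rho_tilde :: op4 where
  "rho_tilde i j = (\<Sum>k<4. (1/4) * rho_tilde_comp k i j)"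

definition is_density :: "op4 \<Rightarrow> bool" where
  "is_density \<sigma> \<longleftrightarrow> (\<forall>i j. \<sigma> i j = \<sigma> j i) \<and> (\<Sum>i\<in>UNIV. \<sigma> i i) = 1
     \<and> (\<forall>v :: idx4 \<Rightarrow> real. 0 \<le> (\<Sum>i\<in>UNIV. \<Sum>j\<in>UNIV. v i * \<sigma> i j * v j))"

text \<open>A strategy: finite label set L, probabilities q, states sigma e; Eve knows e.\<close>
definition valid_strategy :: "(nat \<Rightarrow> real) \<Rightarrow> (nat \<Rightarrow> op4) \<Rightarrow> nat set \<Rightarrow> bool" where
  "valid_strategy q \<sigma> L \<longleftrightarrow> finite L \<and> L \<noteq> {} \<and> (\<forall>e\<in>L. 0 \<le> q e) \<and> sum q L = 1
     \<and> (\<forall>e\<in>L. is_density (\<sigma> e))"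

definition reproduces :: "bcase \<Rightarrow> (nat \<Rightarrow> real) \<Rightarrow> (nat \<Rightarrow> op4) \<Rightarrow> nat set \<Rightarrow> bool" where
  "reproduces cs q \<sigma> L \<longleftrightarrow>
     (\<forall>x y z a b c. y \<in> Ysets cs \<longrightarrow> b \<in> Bouts cs \<longrightarrow>
        (\<Sum>e\<in>L. q e * prob cs (\<sigma> e) x y z a b c) = prob cs rho x y z a b c)"

definition guessABC :: "bcase \<Rightarrow> (nat \<Rightarrow> real) \<Rightarrow> (nat \<Rightarrow> op4) \<Rightarrow> nat set \<Rightarrow> real" where
  "guessABC cs q \<sigma> L = (\<Sum>e\<in>L. q e *
     Max {prob cs (\<sigma> e) False 0 False a b c | a b c. b \<in> Bouts cs})"

definition guessAC :: "bcase \<Rightarrow> (nat \<Rightarrow> real) \<Rightarrow> (nat \<Rightarrow> op4) \<Rightarrow> nat set \<Rightarrow> real" where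
  "guessAC cs q \<sigma> L = (\<Sum>e\<in>L. q e *
     Max {(\<Sum>b\<in>Bouts cs. prob cs (\<sigma> e) False 0 False a b c) | a c. True})"

definition PguessABC :: "bcase \<Rightarrow> real" where
  "PguessABC cs = Sup {guessABC cs q \<sigma> L | q \<sigma> L. valid_strategy q \<sigma> L \<and> reproduces cs q \<sigma> L}"

definition PguessAC :: "bcase \<Rightarrow> real" where
  "PguessAC cs = Sup {guessAC cs q \<sigma> L | q \<sigma> L. valid_strategy q \<sigma> L \<and> reproduces cs q \<sigma> L}"

definition HminABC :: "bcase \<Rightarrow> real" where "HminABC cs = - log 2 (PguessABC cs)"
definition HminAC :: "bcase \<Rightarrow> real" where "HminAC cs = - log 2 (PguessAC cs)"

end

theory Submission
  imports Defs
begin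

text \<open>Entanglement swapping writes the product of the two singlets as an equal-weight signed
  superposition of the four states \<open>\<psi>\<^sub>k(AC) \<otimes> \<psi>\<^sub>k(B\<^sub>1B\<^sub>2)\<close>, \<open>\<psi>\<^sub>k\<close> running over the Bell basis.
  All measurements of B considered here (the Bell measurement, \<open>\<sigma>\<^sub>z \<otimes> \<sigma>\<^sub>z\<close> and \<open>\<sigma>\<^sub>x \<otimes> \<sigma>\<^sub>x\<close>) are
  diagonal in the Bell basis of \<open>B\<^sub>1B\<^sub>2\<close>, so the coherences between different \<open>k\<close> never show up
  in \<open>p(abc|xyz)\<close>: the Bell-dephased mixture \<^const>\<open>rho_tilde\<close> reproduces all statistics.
  In branch \<open>k\<close>, B's outcome at \<open>y = 0\<close> is a function of \<open>k\<close> and \<open>A\<^sub>0 \<otimes> C\<^sub>0\<close> has correlator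
  \<open>1, 0, 0, -1\<close>; hence Eve, knowing \<open>k\<close>, guesses right with probability \<open>(1 + |corr k|)/4\<close>,
  which averages to \<open>3/8\<close>. Entries of density matrices are bounded by 1, so the guessing
  probabilities of all strategies are bounded and \<open>3/8\<close> lies below their supremum.\<close>

lemma sum_UNIV_bool_prod:
  "(\<Sum>i\<in>(UNIV::(bool \<times> 'a::finite) set). f i) = (\<Sum>i\<in>UNIV. f (False, i)) + (\<Sum>i\<in>UNIV. f (True, i))"
proof -
  have "(\<Sum>i\<in>(UNIV::(bool \<times> 'a) set). f i) = (\<Sum>b\<in>UNIV. \<Sum>i\<in>UNIV. f (b, i))"
    by (subst UNIV_Times_UNIV[symmetric], subst sum.cartesian_product) simp
  then show ?thesis by (simp add: UNIV_bool)
qed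

lemma sum_upto_4: "(\<Sum>k\<in>{0..<4::nat}. f k) = f 0 + f 1 + f 2 + f 3"
  by (simp add: atLeast0LessThan eval_nat_numeral lessThan_Suc ac_simps)

lemma finite_setcompr3: "finite B \<Longrightarrow> finite {f a b c | a b c. b \<in> B}" for f :: "bool \<Rightarrow> 'b \<Rightarrow> bool \<Rightarrow> 'c"
proof -
  assume "finite B"
  moreover have "{f a b c | a b c. b \<in> B} = (\<lambda>(a, b, c). f a b c) ` (UNIV \<times> B \<times> UNIV)"
    by force
  ultimately show ?thesis by simp
qed

lemma finite_setcompr2: "finite {g a c | a c. True}" for g :: "bool \<Rightarrow> bool \<Rightarrow> 'c"
  using finite_setcompr3[of "{()}" "\<lambda>a _ c. g a c"] by simp

lemma sum_two_point:
  fixes g :: "'a::finite \<Rightarrow> real"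
  shows "(\<Sum>m\<in>UNIV. (of_bool (m = i) + s * of_bool (m = j)) * g m) = g i + s * g j"
  by (simp add: distrib_right sum.distrib mult.assoc sum_distrib_left[symmetric] Int_def)

lemma quad_form_two_point:
  fixes \<sigma> :: op4 and i j :: idx4 and s :: real
  defines "w \<equiv> \<lambda>m. of_bool (m = i) + s * of_bool (m = j)"
  shows "(\<Sum>m\<in>UNIV. \<Sum>n\<in>UNIV. w m * \<sigma> m n * w n)
    = \<sigma> i i + s * \<sigma> i j + s * \<sigma> j i + s\<^sup>2 * \<sigma> j j"
proof -
  have "(\<Sum>n\<in>UNIV. w m * \<sigma> m n * w n) = w m * (\<sigma> m i + s * \<sigma> m j)" for m
  proof -
    have "(\<Sum>n\<in>UNIV. w m * \<sigma> m n * w n) = w m * (\<Sum>n\<in>UNIV. w n * \<sigma> m n)"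
      by (simp add: sum_distrib_left mult_ac)
    then show ?thesis unfolding w_def by (simp only: sum_two_point)
  qed
  then have "(\<Sum>m\<in>UNIV. \<Sum>n\<in>UNIV. w m * \<sigma> m n * w n)
      = (\<Sum>m\<in>UNIV. w m * (\<sigma> m i + s * \<sigma> m j))" by simp
  also have "\<dots> = \<sigma> i i + s * \<sigma> i j + s * (\<sigma> j i + s * \<sigma> j j)"
    unfolding w_def by (rule sum_two_point)
  finally show ?thesis by (simp add: algebra_simps power2_eq_square)
qed

lemma density_entry_abs_le_one:
  assumes "is_density \<sigma>"
  shows "\<bar>\<sigma> i j\<bar> \<le> 1"
proof -
  have sym: "\<sigma> j i = \<sigma> i j" and trace: "(\<Sum>l\<in>UNIV. \<sigma> l l) = 1"
    and psd: "\<And>v. 0 \<le> (\<Sum>m\<in>UNIV. \<Sum>n\<in>UNIV. v m * \<sigma> m n * v n)"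
    using assms unfolding is_density_def by blast+
  have form: "0 \<le> \<sigma> l l + s * \<sigma> l m + s * \<sigma> m l + s\<^sup>2 * \<sigma> m m" for l m s
    using psd[of "\<lambda>n. of_bool (n = l) + s * of_bool (n = m)"] by (simp only: quad_form_two_point)
  have diag_nonneg: "0 \<le> \<sigma> l l" for l
    using form[where l = l and m = l and s = 0] by simp
  have diag_le: "\<sigma> l l \<le> 1" for l
    using member_le_sum[of l UNIV "\<lambda>l. \<sigma> l l"] diag_nonneg trace by simp
  show ?thesis
    using form[where l = i and m = j and s = 1] form[where l = i and m = j and s = "-1"]
      sym diag_le[of i] diag_le[of j]
    by (simp add: abs_le_iff)
qed

lemma is_density_outer:
  assumes "(\<Sum>i\<in>UNIV. v i * v i) = 1"
  shows "is_density (\<lambda>i j. v i * v j)"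
proof -
  have "(\<Sum>i\<in>UNIV. \<Sum>j\<in>UNIV. w i * (v i * v j) * w j) = (\<Sum>i\<in>UNIV. w i * v i)\<^sup>2" for w
    by (simp add: power2_eq_square sum_product mult_ac)
  then show ?thesis using assms by (simp add: is_density_def mult.commute)
qed

definition bell_pair_vec :: "nat \<Rightarrow> idx4 \<Rightarrow> real" where
  "bell_pair_vec k = (\<lambda>(a, b1, b2, c). bellv k a c * bellv k b1 b2)"

definition singlets_vec :: "idx4 \<Rightarrow> real" where
  "singlets_vec = (\<lambda>(a, b1, b2, c). singlet a b1 * singlet b2 c)"

lemma rho_tilde_comp_outer: "rho_tilde_comp k i j = bell_pair_vec k i * bell_pair_vec k j"
  by (cases i; cases j) (simp add: rho_tilde_comp_def bell_pair_vec_def mult_ac)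

lemma rho_outer: "rho i j = singlets_vec i * singlets_vec j"
  by (cases i; cases j) (simp add: rho_def singlets_vec_def mult_ac)

lemma bell_pair_vec_norm: "k < 4 \<Longrightarrow> (\<Sum>i\<in>UNIV. bell_pair_vec k i * bell_pair_vec k i) = 1"
  by (auto simp: less_Suc_eq eval_nat_numeral bell_pair_vec_def sum_UNIV_bool_prod UNIV_bool
      bellv_def sgn_bit_def)

lemma is_density_rho_tilde_comp: "k < 4 \<Longrightarrow> is_density (rho_tilde_comp k)"
  using is_density_outer[OF bell_pair_vec_norm] by (simp add: rho_tilde_comp_outer[abs_def])

definition meas_kernel :: "bcase \<Rightarrow> bool \<Rightarrow> nat \<Rightarrow> bool \<Rightarrow> bool \<Rightarrow> nat \<Rightarrow> bool \<Rightarrow> idx4 \<Rightarrow> idx4 \<Rightarrow> real"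
  where
  "meas_kernel cs x y z a b c j i = (case (j, i) of ((a1, b1, b2, c1), (a2, b1', b2', c2)) \<Rightarrow>
     projAC x a a1 a2 * projB cs y b (b1, b2) (b1', b2') * projAC z c c1 c2)"

lemma prob_eq_kernel_sum:
  "prob cs \<sigma> x y z a b c = (\<Sum>i\<in>UNIV. \<Sum>j\<in>UNIV. \<sigma> i j * meas_kernel cs x y z a b c j i)"
  by (simp add: prob_def meas_kernel_def)

text \<open>Restricting to the four nonzero amplitudes is what keeps the case-by-case evaluation of
  the probabilities below within reach of the simplifier.\<close>

lemma prob_outer_supported:
  assumes "\<And>i j. \<sigma> i j = v i * v j" and "\<And>i. i \<notin> S \<Longrightarrow> v i = 0"
  shows "prob cs \<sigma> x y z a b c = (\<Sum>i\<in>S. \<Sum>j\<in>S. v i * v j * meas_kernel cs x y z a b c j i)"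
proof -
  have "prob cs \<sigma> x y z a b c = (\<Sum>i\<in>UNIV. \<Sum>j\<in>UNIV. v i * v j * meas_kernel cs x y z a b c j i)"
    by (simp add: prob_eq_kernel_sum assms(1))
  also have "\<dots> = (\<Sum>i\<in>UNIV. \<Sum>j\<in>S. v i * v j * meas_kernel cs x y z a b c j i)"
    by (intro sum.cong refl sum.mono_neutral_right) (auto simp: assms(2))
  also have "\<dots> = (\<Sum>i\<in>S. \<Sum>j\<in>S. v i * v j * meas_kernel cs x y z a b c j i)"
    by (rule sum.mono_neutral_right) (auto simp: assms(2))
  finally show ?thesis .
qed

definition Phi_support :: "idx4 set" where
  "Phi_support = {(False, False, False, False), (False, True, True, False),
                  (True, False, False, True), (True, True, True, True)}"

definition Psi_support :: "idx4 set" where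
  "Psi_support = {(False, False, True, True), (False, True, False, True),
                  (True, False, True, False), (True, True, False, False)}"

definition singlets_support :: "idx4 set" where
  "singlets_support = {(False, True, False, True), (False, True, True, False),
                       (True, False, False, True), (True, False, True, False)}"

lemma bell_pair_vec_Phi_support: "k \<le> 1 \<Longrightarrow> i \<notin> Phi_support \<Longrightarrow> bell_pair_vec k i = 0"
  by (cases i) (auto simp: bell_pair_vec_def Phi_support_def bellv_def)

lemma bell_pair_vec_Psi_support: "2 \<le> k \<Longrightarrow> i \<notin> Psi_support \<Longrightarrow> bell_pair_vec k i = 0"
  by (cases i) (auto simp: bell_pair_vec_def Psi_support_def bellv_def)

lemma singlets_vec_support: "i \<notin> singlets_support \<Longrightarrow> singlets_vec i = 0"
  by (cases i) (auto simp: singlets_vec_def singlets_support_def singlet_def bellv_def)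

lemma prob_rho_tilde_comp_Phi:
  "k \<le> 1 \<Longrightarrow> prob cs (rho_tilde_comp k) x y z a b c = (\<Sum>i\<in>Phi_support. \<Sum>j\<in>Phi_support.
     bell_pair_vec k i * bell_pair_vec k j * meas_kernel cs x y z a b c j i)"
  by (rule prob_outer_supported[OF rho_tilde_comp_outer])
    (rule bell_pair_vec_Phi_support)

lemma prob_rho_tilde_comp_Psi:
  "2 \<le> k \<Longrightarrow> prob cs (rho_tilde_comp k) x y z a b c = (\<Sum>i\<in>Psi_support. \<Sum>j\<in>Psi_support.
     bell_pair_vec k i * bell_pair_vec k j * meas_kernel cs x y z a b c j i)"
  by (rule prob_outer_supported[OF rho_tilde_comp_outer])
    (rule bell_pair_vec_Psi_support)

lemma prob_rho_singlets:
  "prob cs rho x y z a b c = (\<Sum>i\<in>singlets_support. \<Sum>j\<in>singlets_support.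
     singlets_vec i * singlets_vec j * meas_kernel cs x y z a b c j i)"
  by (rule prob_outer_supported[OF rho_outer])
    (rule singlets_vec_support)

lemmas prob_evaluation = prob_rho_singlets prob_rho_tilde_comp_Phi prob_rho_tilde_comp_Psi
  Phi_support_def Psi_support_def singlets_support_def bell_pair_vec_def singlets_vec_def
  meas_kernel_def singlet_def bellv_def sgn_bit_def projAC_def obsAC_def projB_def
  sigma_z_def sigma_x_def id1_def Bobs_def

lemma prob_rho_eq_Bell_mixture:
  assumes "y \<in> Ysets cs" and "b \<in> Bouts cs"
  shows "prob cs rho x y z a b c = (\<Sum>k\<in>{0..<4}. 1/4 * prob cs (rho_tilde_comp k) x y z a b c)"
proof (cases cs)
  case Case14
  then have "b = 0 \<or> b = 1 \<or> b = 2 \<or> b = 3" "y = 0"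
    using assms by (auto simp: Bouts_def Ysets_def)
  with Case14 show ?thesis
    by (elim disjE; cases x; cases z; cases a; cases c) (simp_all add: sum_upto_4 prob_evaluation)
next
  case Case22
  then have "b = 0 \<or> b = 1" "y = 0 \<or> y = 1"
    using assms by (auto simp: Bouts_def Ysets_def)
  with Case22 show ?thesis
    by (elim disjE; cases x; cases z; cases a; cases c)
      (simp_all add: sum_upto_4 prob_evaluation, simp_all add: field_simps)
qed

text \<open>Correlator of \<open>A\<^sub>0 \<otimes> C\<^sub>0\<close> in the Bell state \<open>k\<close>, and B's outcome at \<open>y = 0\<close> on \<open>\<psi>\<^sub>k(B\<^sub>1B\<^sub>2)\<close>.\<close>

definition corr :: "nat \<Rightarrow> real" where
  "corr k = (if k = 0 then 1 else if k = 3 then -1 else 0)"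

definition bob_outcome :: "bcase \<Rightarrow> nat \<Rightarrow> nat" where
  "bob_outcome cs k = (case cs of Case14 \<Rightarrow> k | Case22 \<Rightarrow> if k \<le> 1 then 0 else 1)"

lemma prob_rho_tilde_comp_setting0:
  assumes "k < 4" and "b \<in> Bouts cs"
  shows "prob cs (rho_tilde_comp k) False 0 False a b c
    = (if b = bob_outcome cs k then (1 + corr k * sgn_bit a * sgn_bit c) / 4 else 0)"
proof -
  have k: "k = 0 \<or> k = 1 \<or> k = 2 \<or> k = 3" using assms(1) by arith
  show ?thesis
  proof (cases cs)
    case Case14
    then have "b = 0 \<or> b = 1 \<or> b = 2 \<or> b = 3" using assms(2) by (auto simp: Bouts_def)
    with k Case14 show ?thesis
      by (elim disjE; cases a; cases c)
        (simp_all add: prob_evaluation corr_def bob_outcome_def, simp_all add: field_simps)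
  next
    case Case22
    then have "b = 0 \<or> b = 1" using assms(2) by (auto simp: Bouts_def)
    with k Case22 show ?thesis
      by (elim disjE; cases a; cases c)
        (simp_all add: prob_evaluation corr_def bob_outcome_def, simp_all add: field_simps)
  qed
qed

lemma finite_Bouts: "finite (Bouts cs)"
  by (cases cs) (simp_all add: Bouts_def)

lemma bob_outcome_in_Bouts: "k < 4 \<Longrightarrow> bob_outcome cs k \<in> Bouts cs"
  by (cases cs) (auto simp: bob_outcome_def Bouts_def)

lemma corr_weight_le: "(1 + corr k * sgn_bit a * sgn_bit c) / 4 \<le> (1 + \<bar>corr k\<bar>) / 4"
  by (cases a; cases c) (simp_all add: sgn_bit_def)

lemma corr_weight_attained: "(1 + corr k * sgn_bit False * sgn_bit (corr k < 0)) / 4 = (1 + \<bar>corr k\<bar>) / 4"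
  by (simp add: sgn_bit_def abs_if)

lemma max_prob_ABC:
  assumes k: "k < 4"
  shows "Max {prob cs (rho_tilde_comp k) False 0 False a b c | a b c. b \<in> Bouts cs}
    = (1 + \<bar>corr k\<bar>) / 4"
proof (rule Max_eqI)
  show "finite {prob cs (rho_tilde_comp k) False 0 False a b c | a b c. b \<in> Bouts cs}"
    by (rule finite_setcompr3[OF finite_Bouts])
next
  fix p assume "p \<in> {prob cs (rho_tilde_comp k) False 0 False a b c | a b c. b \<in> Bouts cs}"
  then obtain a b c where "b \<in> Bouts cs" and "p = prob cs (rho_tilde_comp k) False 0 False a b c"
    by blast
  then show "p \<le> (1 + \<bar>corr k\<bar>) / 4"
    using corr_weight_le[of k a c] by (simp add: prob_rho_tilde_comp_setting0 k)
next
  have "prob cs (rho_tilde_comp k) False 0 False False (bob_outcome cs k) (corr k < 0)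
      = (1 + \<bar>corr k\<bar>) / 4"
    using corr_weight_attained
    by (simp add: prob_rho_tilde_comp_setting0 k bob_outcome_in_Bouts)
  then show "(1 + \<bar>corr k\<bar>) / 4
      \<in> {prob cs (rho_tilde_comp k) False 0 False a b c | a b c. b \<in> Bouts cs}"
    using bob_outcome_in_Bouts[OF k] by (blast intro: sym)
qed

lemma marginal_prob_AC:
  assumes k: "k < 4"
  shows "(\<Sum>b\<in>Bouts cs. prob cs (rho_tilde_comp k) False 0 False a b c)
    = (1 + corr k * sgn_bit a * sgn_bit c) / 4"
  using finite_Bouts bob_outcome_in_Bouts[OF k]
  by (simp add: prob_rho_tilde_comp_setting0 k cong: sum.cong)

lemma max_prob_AC:
  assumes k: "k < 4"
  shows "Max {(\<Sum>b\<in>Bouts cs. prob cs (rho_tilde_comp k) False 0 False a b c) | a c. True}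
    = (1 + \<bar>corr k\<bar>) / 4"
proof -
  have "Max {(\<Sum>b\<in>Bouts cs. prob cs (rho_tilde_comp k) False 0 False a b c) | a c. True}
      = Max {(1 + corr k * sgn_bit a * sgn_bit c) / 4 | a c. True}"
    by (simp add: marginal_prob_AC k)
  also have "\<dots> = (1 + \<bar>corr k\<bar>) / 4"
  proof (rule Max_eqI)
    show "finite {(1 + corr k * sgn_bit a * sgn_bit c) / 4 | a c. True}"
      by (rule finite_setcompr2)
    show "p \<le> (1 + \<bar>corr k\<bar>) / 4" if "p \<in> {(1 + corr k * sgn_bit a * sgn_bit c) / 4 | a c. True}" for p
      using that corr_weight_le by blast
    show "(1 + \<bar>corr k\<bar>) / 4 \<in> {(1 + corr k * sgn_bit a * sgn_bit c) / 4 | a c. True}"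
      using corr_weight_attained by (blast intro: sym)
  qed
  finally show ?thesis .
qed

lemma sum_corr_weights: "(\<Sum>k\<in>{0..<4}. 1/4 * ((1 + \<bar>corr k\<bar>) / 4)) = 3/8"
  by (simp add: sum_upto_4 corr_def)

lemma guessABC_rho_tilde: "guessABC cs (\<lambda>_. 1/4) rho_tilde_comp {0..<4} = 3/8"
  unfolding guessABC_def sum_corr_weights[symmetric]
  by (rule sum.cong[OF refl], subst max_prob_ABC) simp_all

lemma guessAC_rho_tilde: "guessAC cs (\<lambda>_. 1/4) rho_tilde_comp {0..<4} = 3/8"
  unfolding guessAC_def sum_corr_weights[symmetric]
  by (rule sum.cong[OF refl], subst max_prob_AC) simp_all

lemma one_le_sqrt_2: "1 \<le> sqrt (2::real)" "1 \<le> 2 * sqrt (2::real)"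
proof -
  show "1 \<le> sqrt (2::real)" by simp
  then show "1 \<le> 2 * sqrt (2::real)" by linarith
qed

lemma projAC_abs_le_one: "\<bar>projAC x a i j\<bar> \<le> 1"
  using one_le_sqrt_2
  by (cases x; cases a; cases i; cases j)
    (auto simp: projAC_def obsAC_def sigma_z_def sigma_x_def id1_def sgn_bit_def field_simps)

lemma bellv_abs_le_one: "\<bar>bellv k u v\<bar> \<le> 1"
  using one_le_sqrt_2 by (auto simp: bellv_def sgn_bit_def field_simps)

lemma projB_setting0_abs_le_one: "\<bar>projB cs 0 b u v\<bar> \<le> 1"
proof (cases u; cases v; cases cs)
  fix u1 u2 v1 v2 assume "u = (u1, u2)" "v = (v1, v2)" "cs = Case14"
  then show ?thesis
    using bellv_abs_le_one[of b u1 u2] bellv_abs_le_one[of b v1 v2]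
    by (simp add: projB_def abs_mult mult_le_one)
next
  fix u1 u2 v1 v2 assume "u = (u1, u2)" "v = (v1, v2)" "cs = Case22"
  then show ?thesis
    by (cases u1; cases u2; cases v1; cases v2) (auto simp: projB_def Bobs_def sigma_z_def sgn_bit_def)
qed

lemma meas_kernel_setting0_abs_le_one: "\<bar>meas_kernel cs x 0 z a b c j i\<bar> \<le> 1"
  using projAC_abs_le_one projB_setting0_abs_le_one
  by (auto simp: meas_kernel_def abs_mult intro!: mult_le_one split: prod.split)

lemma prob_setting0_le:
  assumes "is_density \<sigma>"
  shows "prob cs \<sigma> x 0 z a b c \<le> 256"
proof -
  have "\<sigma> i j * meas_kernel cs x 0 z a b c j i \<le> 1" for i j
  proof -
    have "\<bar>\<sigma> i j\<bar> * \<bar>meas_kernel cs x 0 z a b c j i\<bar> \<le> 1"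
      by (rule mult_le_one[OF density_entry_abs_le_one[OF assms] abs_ge_zero
            meas_kernel_setting0_abs_le_one])
    then show ?thesis
      using abs_ge_self[of "\<sigma> i j * meas_kernel cs x 0 z a b c j i"] by (simp add: abs_mult)
  qed
  then have "prob cs \<sigma> x 0 z a b c \<le> (\<Sum>i\<in>(UNIV::idx4 set). \<Sum>j\<in>(UNIV::idx4 set). 1)"
    unfolding prob_eq_kernel_sum by (intro sum_mono)
  also have "\<dots> = 256"
    by (simp add: card_UNIV_bool UNIV_Times_UNIV[symmetric] card_cartesian_product del: UNIV_Times_UNIV)
  finally show ?thesis .
qed

lemma strategy_average_le:
  assumes "valid_strategy q \<sigma> L" and "\<And>e. e \<in> L \<Longrightarrow> g e \<le> M"
  shows "(\<Sum>e\<in>L. q e * g e) \<le> M"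
proof -
  have "(\<Sum>e\<in>L. q e * g e) \<le> (\<Sum>e\<in>L. q e * M)"
    using assms by (intro sum_mono mult_left_mono) (auto simp: valid_strategy_def)
  also have "\<dots> = M"
    using assms(1) by (simp add: valid_strategy_def sum_distrib_right[symmetric])
  finally show ?thesis .
qed

lemma guessABC_le:
  assumes "valid_strategy q \<sigma> L"
  shows "guessABC cs q \<sigma> L \<le> 256"
  unfolding guessABC_def
proof (rule strategy_average_le[OF assms], rule Max.boundedI)
  fix e assume "e \<in> L"
  then have "is_density (\<sigma> e)" using assms by (simp add: valid_strategy_def)
  then show "p \<le> 256" if "p \<in> {prob cs (\<sigma> e) False 0 False a b c | a b c. b \<in> Bouts cs}" for p
    using that prob_setting0_le by blast
  show "finite {prob cs (\<sigma> e) False 0 False a b c | a b c. b \<in> Bouts cs}"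
    by (rule finite_setcompr3[OF finite_Bouts])
  show "{prob cs (\<sigma> e) False 0 False a b c | a b c. b \<in> Bouts cs} \<noteq> {}"
    using bob_outcome_in_Bouts[of 0 cs] by auto
qed

lemma guessAC_le:
  assumes "valid_strategy q \<sigma> L"
  shows "guessAC cs q \<sigma> L \<le> 256 * card (Bouts cs)"
  unfolding guessAC_def
proof (rule strategy_average_le[OF assms], rule Max.boundedI)
  fix e assume "e \<in> L"
  then have "is_density (\<sigma> e)" using assms by (simp add: valid_strategy_def)
  then have "(\<Sum>b\<in>Bouts cs. prob cs (\<sigma> e) False 0 False a b c) \<le> 256 * card (Bouts cs)" for a c
    using sum_mono[of "Bouts cs" "\<lambda>b. prob cs (\<sigma> e) False 0 False a b c" "\<lambda>_. 256"] prob_setting0_le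
    by (simp add: mult.commute)
  then show "p \<le> 256 * card (Bouts cs)"
    if "p \<in> {(\<Sum>b\<in>Bouts cs. prob cs (\<sigma> e) False 0 False a b c) | a c. True}" for p
    using that by blast
  show "finite {(\<Sum>b\<in>Bouts cs. prob cs (\<sigma> e) False 0 False a b c) | a c. True}"
    by (rule finite_setcompr2)
qed auto

lemma le_Sup_strategy_values:
  fixes f :: "(nat \<Rightarrow> real) \<Rightarrow> (nat \<Rightarrow> op4) \<Rightarrow> nat set \<Rightarrow> real"
  assumes "\<And>q \<sigma> L. valid_strategy q \<sigma> L \<Longrightarrow> f q \<sigma> L \<le> M"
    and "valid_strategy q \<sigma> L" and "reproduces cs q \<sigma> L"
  shows "f q \<sigma> L \<le> Sup {f q \<sigma> L | q \<sigma> L. valid_strategy q \<sigma> L \<and> reproduces cs q \<sigma> L}"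
proof (rule cSup_upper)
  show "f q \<sigma> L \<in> {f q \<sigma> L | q \<sigma> L. valid_strategy q \<sigma> L \<and> reproduces cs q \<sigma> L}"
    using assms(2,3) by blast
  show "bdd_above {f q \<sigma> L | q \<sigma> L. valid_strategy q \<sigma> L \<and> reproduces cs q \<sigma> L}"
    using assms(1) by (auto intro!: bdd_aboveI[of _ M])
qed

lemma neg_log_le_log_inverse:
  assumes "0 < p" and "p \<le> P"
  shows "- log 2 P \<le> log 2 (1 / p)"
  using assms by (simp add: log_divide log_le_cancel_iff)

lemma valid_strategy_rho_tilde: "valid_strategy (\<lambda>_. 1/4) rho_tilde_comp {0..<4}"
  by (auto simp: valid_strategy_def is_density_rho_tilde_comp)

lemma reproduces_rho_tilde: "reproduces cs (\<lambda>_. 1/4) rho_tilde_comp {0..<4}"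
  by (auto simp: reproduces_def prob_rho_eq_Bell_mixture)

theorem mainTheorem4:
  fixes cs :: bcase
  shows "rho_tilde = (\<lambda>i j. \<Sum>k\<in>{0..<4}. (1/4) * rho_tilde_comp k i j)
    \<and> valid_strategy (\<lambda>_. 1/4) rho_tilde_comp {0..<4}
    \<and> reproduces cs (\<lambda>_. 1/4) rho_tilde_comp {0..<4}
    \<and> guessABC cs (\<lambda>_. 1/4) rho_tilde_comp {0..<4} = 3/8
    \<and> guessAC cs (\<lambda>_. 1/4) rho_tilde_comp {0..<4} = 3/8
    \<and> HminABC cs \<le> log 2 (8/3)
    \<and> HminAC cs \<le> log 2 (8/3)"
proof (intro conjI valid_strategy_rho_tilde reproduces_rho_tilde guessABC_rho_tilde guessAC_rho_tilde)
  show "rho_tilde = (\<lambda>i j. \<Sum>k\<in>{0..<4}. (1/4) * rho_tilde_comp k i j)"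
    by (intro ext) (simp add: rho_tilde_def atLeast0LessThan)
  have "3/8 \<le> PguessABC cs"
    using le_Sup_strategy_values[of "guessABC cs", OF guessABC_le valid_strategy_rho_tilde reproduces_rho_tilde]
    by (simp add: PguessABC_def guessABC_rho_tilde)
  then show "HminABC cs \<le> log 2 (8/3)"
    using neg_log_le_log_inverse[of "3/8"] by (simp add: HminABC_def)
  have "3/8 \<le> PguessAC cs"
    using le_Sup_strategy_values[of "guessAC cs", OF guessAC_le valid_strategy_rho_tilde reproduces_rho_tilde]
    by (simp add: PguessAC_def guessAC_rho_tilde)
  then show "HminAC cs \<le> log 2 (8/3)"
    using neg_log_le_log_inverse[of "3/8"] by (simp add: HminAC_def)
qed

end
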